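(* Let $n\ge 1$, let $\mathcal{D}\subseteq\mathbb{R}^{2n+1}$ be open and let $F:\mathcal{D}\to\mathbb{R}$ be twice continuously differentiable. Write $\theta=(\mathbf{c},\mathbf{b})$ with $\mathbf{c}\in\mathbb{R}^{n+1}$, $\mathbf{b}\in\mathbb{R}^n$, and partition the Hessian as $$\nabla^2_\theta F(\theta)=\begin{pmatrix}\mathcal{H}_{11}(\theta)&\mathcal{H}_{12}(\theta)\\ \mathcal{H}_{21}(\theta)&\mathcal{H}_{22}(\theta)\end{pmatrix},\quad \mathcal{H}_{11}=\nabla^2_{\mathbf{c}\mathbf{c}}F,\ \mathcal{H}_{12}=\nabla^2_{\mathbf{c}\mathbf{b}}F,\ \mathcal{H}_{21}=\nabla^2_{\mathbf{b}\mathbf{c}}F,\ \mathcal{H}_{22}=\nabla^2_{\mathbf{b}\mathbf{b}}F.$$ Let $\mathcal{O}\subseteq\mathcal{D}$ be an open set on which the invertibility assumption holds for the chosen scheme, and let $G=(G_1,G_2):\mathcal{O}\to\mathbb{R}^{2n+1}$ be the block Newton map of either the L-GS or the NL-GS scheme (defined in the context). Let $\theta^*\in\mathcal{O}$ be a fixed point of $G$ and assume that $\nabla^2_\theta F(\theta^* )$ is symmetric positive definite. Then $G$ is differentiable at $\theta^*$ with Jacobian $$\mathbf{J}_G(\theta^* )=I_{2n+1}-B(\theta^* )^{-1}\nabla^2_\theta F(\theta^* ),\qquad B(\theta)=\begin{pmatrix}\mathcal{H}_{11}(\theta)&\mathbf{0}\\ \mathcal{H}_{21}(\theta)&\mathc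al{H}_{22}(\theta)\end{pmatrix}.$$
   Context: Block Newton maps. For $\theta=(\mathbf{c},\mathbf{b})$ define $G_1(\theta)=\mathbf{c}-\mathcal{H}_{11}(\theta)^{-1}\nabla_{\mathbf{c}}F(\theta)$. For the NL-GS (block nonlinear Gauss–Seidel) scheme, $G_2(\theta)=\mathbf{b}-\mathcal{H}_{22}(G_1(\theta),\mathbf{b})^{-1}\nabla_{\mathbf{b}}F(G_1(\theta),\mathbf{b})$. For the L-GS (block linear Gauss–Seidel) scheme, $G_2(\theta)=\mathbf{b}-\mathcal{H}_{22}(\theta)^{-1}\big(\nabla_{\mathbf{b}}F(\theta)+\mathcal{H}_{21}(\theta)(G_1(\theta)-\mathbf{c})\big)$. Then $G(\theta)=(G_1(\theta),G_2(\theta))$. Invertibility assumption on $\mathcal{O}$: for every $\theta=(\mathbf{c},\mathbf{b})\in\mathcal{O}$, $\mathcal{H}_{11}(\theta)$ is invertible, and moreover $\mathcal{H}_{22}(G_1(\theta),\mathbf{b})$ is invertible (with $(G_1(\theta),\mathbf{b})\in\mathcal{D}$) for NL-GS, respectively $\mathcal{H}_{22}(\theta)$ is invertible for L-GS. $I_{2n+1}$ is the identity matrix of order $2n+1$. *)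

theory Defs
  imports "HOL-Analysis.Analysis"
begin

text \<open>Parameter vectors theta in R^(2n+1) are modelled as real^('c + 'b), where the
  index type 'c (card n+1) indexes the block c and 'b (card n) indexes the block b.\<close>

definition cpart :: "real^('c::finite + 'b::finite) \<Rightarrow> real^'c" where
  "cpart th = (\<chi> i. th $ Inl i)"

definition bpart :: "real^('c::finite + 'b::finite) \<Rightarrow> real^'b" where
  "bpart th = (\<chi> j. th $ Inr j)"

definition join :: "real^'c::finite \<Rightarrow> real^'b::finite \<Rightarrow> real^('c + 'b)" where
  "join c b = (\<chi> k. case k of Inl i \<Rightarrow> c $ i | Inr j \<Rightarrow> b $ j)"

definition C2_on :: "'a::euclidean_space set \<Rightarrow> ('a \<Rightarrow> real) \<Rightarrow> bool" where
  "C2_on D F \<longleftrightarrow> (\<exists>(F' :: 'a \<Rightarrow> 'a \<Rightarrow>\<^sub>L real) (F'' :: 'a \<Rightarrow> 'a \<Rightarrow>\<^sub>L ('a \<Rightarrow>\<^sub>L real)).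
      (\<forall>x\<in>D. (F has_derivative blinfun_apply (F' x)) (at x) \<and>
               (F' has_derivative blinfun_apply (F'' x)) (at x)) \<and>
      continuous_on D F'')"

definition pd :: "'n::finite \<Rightarrow> (real^'n \<Rightarrow> real) \<Rightarrow> real^'n \<Rightarrow> real" where
  "pd k f x = deriv (\<lambda>t. f (x + t *\<^sub>R axis k 1)) 0"

definition grad :: "(real^'n::finite \<Rightarrow> real) \<Rightarrow> real^'n \<Rightarrow> real^'n" where
  "grad F x = (\<chi> k. pd k F x)"

definition hess :: "(real^'n::finite \<Rightarrow> real) \<Rightarrow> real^'n \<Rightarrow> real^'n^'n" where
  "hess F x = (\<chi> k l. pd l (\<lambda>y. pd k F y) x)"

definition grad_c :: "(real^('c::finite + 'b::finite) \<Rightarrow> real) \<Rightarrow> real^('c + 'b) \<Rightarrow> real^'c" where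
  "grad_c F th = cpart (grad F th)"

definition grad_b :: "(real^('c::finite + 'b::finite) \<Rightarrow> real) \<Rightarrow> real^('c + 'b) \<Rightarrow> real^'b" where
  "grad_b F th = bpart (grad F th)"

definition H11 :: "(real^('c::finite + 'b::finite) \<Rightarrow> real) \<Rightarrow> real^('c + 'b) \<Rightarrow> real^'c^'c" where
  "H11 F th = (\<chi> i j. hess F th $ Inl i $ Inl j)"

definition H12 :: "(real^('c::finite + 'b::finite) \<Rightarrow> real) \<Rightarrow> real^('c + 'b) \<Rightarrow> real^'b^'c" where
  "H12 F th = (\<chi> i j. hess F th $ Inl i $ Inr j)"

definition H21 :: "(real^('c::finite + 'b::finite) \<Rightarrow> real) \<Rightarrow> real^('c + 'b) \<Rightarrow> real^'c^'b" where
  "H21 F th = (\<chi> i j. hess F th $ Inr i $ Inl j)"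

definition H22 :: "(real^('c::finite + 'b::finite) \<Rightarrow> real) \<Rightarrow> real^('c + 'b) \<Rightarrow> real^'b^'b" where
  "H22 F th = (\<chi> i j. hess F th $ Inr i $ Inr j)"

definition Bmat :: "(real^('c::finite + 'b::finite) \<Rightarrow> real) \<Rightarrow> real^('c + 'b) \<Rightarrow> real^('c + 'b)^('c + 'b)" where
  "Bmat F th = (\<chi> k l. case (k, l) of (Inl i, Inr j) \<Rightarrow> 0 | _ \<Rightarrow> hess F th $ k $ l)"

datatype scheme = LGS | NLGS

definition G1 :: "(real^('c::finite + 'b::finite) \<Rightarrow> real) \<Rightarrow> real^('c + 'b) \<Rightarrow> real^'c" where
  "G1 F th = cpart th - matrix_inv (H11 F th) *v grad_c F th"

fun G2 :: "scheme \<Rightarrow> (real^('c::finite + 'b::finite) \<Rightarrow> real) \<Rightarrow> real^('c + 'b) \<Rightarrow> real^'b" where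
  "G2 NLGS F th = bpart th - matrix_inv (H22 F (join (G1 F th) (bpart th)))
        *v grad_b F (join (G1 F th) (bpart th))"
| "G2 LGS F th = bpart th - matrix_inv (H22 F th)
        *v (grad_b F th + H21 F th *v (G1 F th - cpart th))"

definition Gmap :: "scheme \<Rightarrow> (real^('c::finite + 'b::finite) \<Rightarrow> real) \<Rightarrow> real^('c + 'b) \<Rightarrow> real^('c + 'b)" where
  "Gmap s F th = join (G1 F th) (G2 s F th)"

fun inv_assm :: "scheme \<Rightarrow> (real^('c::finite + 'b::finite) \<Rightarrow> real) \<Rightarrow> (real^('c + 'b)) set \<Rightarrow> (real^('c + 'b)) set \<Rightarrow> bool" where
  "inv_assm NLGS F D Os \<longleftrightarrow> (\<forall>th\<in>Os. invertible (H11 F th) \<and>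
       join (G1 F th) (bpart th) \<in> D \<and> invertible (H22 F (join (G1 F th) (bpart th))))"
| "inv_assm LGS F D Os \<longleftrightarrow> (\<forall>th\<in>Os. invertible (H11 F th) \<and> invertible (H22 F th))"

definition sym_pos_def :: "real^'n::finite^'n \<Rightarrow> bool" where
  "sym_pos_def A \<longleftrightarrow> transpose A = A \<and> (\<forall>x. x \<noteq> 0 \<longrightarrow> x \<bullet> (A *v x) > 0)"

end

theory Submission
  imports Defs
begin

text \<open>At a fixed point th of G each Newton correction vanishes, and since the corrections are
  invertible matrices applied to gradient blocks, th is a critical point of F. Every correction has
  the form M(y) g(y) with M continuous and g differentiable, g(th) = 0; the derivative of such a
  product at th is M(th) g'(th), so the matrices may be frozen at th. The frozen corrections of
  G1 and G2 are exactly the forward substitution solving the block lower triangular system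
  B(th) d = H(th) h, hence J_G(th) h = h - B(th)^-1 H(th) h.\<close>

section \<open>Inverse matrices\<close>

lemma
  fixes A :: "'a::semiring_1^'n^'m"
  assumes "invertible A"
  shows matrix_inv_right: "A ** matrix_inv A = mat 1"
    and matrix_inv_left: "matrix_inv A ** A = mat 1"
  using someI_ex[OF assms[unfolded invertible_def]] by (auto simp: matrix_inv_def)

lemma
  fixes A :: "'a::comm_semiring_1^'n^'m"
  assumes "invertible A"
  shows matrix_inv_cancel_right: "A *v (matrix_inv A *v v) = v"
    and matrix_inv_cancel_left: "matrix_inv A *v (A *v w) = w"
  by (simp_all add: matrix_vector_mul_assoc matrix_inv_right matrix_inv_left assms)

lemma matrix_inv_mult_eq_0_iff:
  fixes A :: "'a::comm_semiring_1^'n^'m"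
  assumes "invertible A"
  shows "matrix_inv A *v v = 0 \<longleftrightarrow> v = 0"
  by (metis assms matrix_inv_cancel_right matrix_vector_mult_0_right)

lemma matrix_vector_mult_minus_right [simp]:
  "(A :: 'a::comm_ring_1^'n::finite^'m) *v (- v) = - (A *v v)"
  by (simp add: vec_eq_iff matrix_vector_mult_def sum_negf)

lemma tendsto_det:
  fixes f :: "'x \<Rightarrow> real^'n::finite^'n"
  assumes "(f \<longlongrightarrow> A) F"
  shows "((\<lambda>x. det (f x)) \<longlongrightarrow> det A) F"
  unfolding det_def by (intro tendsto_intros assms)

lemma matrix_inv_cramer:
  fixes A :: "real^'n::finite^'n"
  assumes "det A \<noteq> 0"
  shows "matrix_inv A = (\<chi> i k. det (\<chi> i' j. if j = i then axis k 1 $ i' else A $ i' $ j) / det A)"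
proof -
  have "invertible A" using assms invertible_det_nz by blast
  then have "matrix_inv A *v axis k 1
      = (\<chi> i. det (\<chi> i' j. if j = i then axis k 1 $ i' else A $ i' $ j) / det A)" for k
    using cramer[OF assms] matrix_inv_cancel_right by blast
  then show ?thesis
    by (simp add: vec_eq_iff matrix_vector_mult_basis column_def)
qed

lemma isCont_matrix_inv:
  fixes A :: "real^'n::finite^'n"
  assumes "invertible A"
  shows "isCont matrix_inv A"
proof -
  define C :: "real^'n^'n \<Rightarrow> real^'n^'n" where
    "C B = (\<chi> i k. det (\<chi> i' j. if j = i then axis k 1 $ i' else B $ i' $ j) / det B)" for B
  have "continuous_on UNIV (det :: real^'n^'n \<Rightarrow> real)"
    unfolding continuous_on_def by (intro ballI tendsto_det tendsto_ident_at)
  then have "open {B :: real^'n^'n. det B \<noteq> 0}"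
    by (intro open_Collect_neq continuous_on_const)
  moreover have "det A \<noteq> 0" using assms invertible_det_nz by blast
  ultimately have "eventually (\<lambda>B. matrix_inv B = C B) (nhds A)"
    unfolding eventually_nhds C_def using matrix_inv_cramer by blast
  moreover have "isCont C A"
    unfolding isCont_def C_def using \<open>det A \<noteq> 0\<close>
    by (intro tendsto_intros tendsto_det) (auto intro!: tendsto_vec_nth)
  ultimately show ?thesis using isCont_cong by blast
qed

section \<open>Products with a vanishing differentiable factor\<close>

lemma bounded_bilinear_matrix_vector_mult:
  "bounded_bilinear ((*v) :: real^'n::finite^'m::finite \<Rightarrow> real^'n \<Rightarrow> real^'m)"
proof -
  have "bilinear ((*v) :: real^'n^'m \<Rightarrow> real^'n \<Rightarrow> real^'m)"
    unfolding bilinear_def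
    by (auto intro!: linearI simp: matrix_vector_mult_add_rdistrib scaleR_matrix_vector_assoc)
  then show ?thesis using bilinear_conv_bounded_bilinear by blast
qed

lemma (in bounded_bilinear) has_derivative_isCont_vanishing:
  assumes M: "isCont M x" and g: "(g has_derivative g') (at x)" and g0: "g x = 0"
  shows "((\<lambda>y. prod (M y) (g y)) has_derivative (\<lambda>h. prod (M x) (g' h))) (at x)"
  \<comment> \<open>M y ** g y - M x ** g y = (M y - M x) ** g y is o(|y - x|): the first factor tends
     to 0 and the second is O(|y - x|) because g x = 0.\<close>
proof -
  obtain K where K: "\<And>a b. norm (prod a b) \<le> norm a * norm b * K" "K > 0"
    using pos_bounded by blast
  have g'_linear: "bounded_linear g'" using g has_derivative_bounded_linear by blast
  then obtain KG where KG: "\<And>h. norm (g' h) \<le> norm h * KG"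
    using bounded_linear.bounded by blast
  define Ng where "Ng y = norm (g y - g' (y - x)) / norm (y - x)" for y
  have "(Ng \<longlongrightarrow> 0) (at x)" using g g0 unfolding has_derivative_iff_norm Ng_def by simp
  show ?thesis
  proof (rule has_derivativeI_sandwich[of 1])
    show "bounded_linear (\<lambda>h. prod (M x) (g' h))"
      by (rule bounded_linear_compose[OF bounded_linear_right g'_linear])
  next
    fix y assume "y \<noteq> x"
    let ?N = "norm (g y - g' (y - x))"
    have "prod (M y) (g y) - prod (M x) (g x) - prod (M x) (g' (y - x))
        = prod (M x) (g y - g' (y - x)) + prod (M y - M x) (g y)"
      by (simp add: g0 diff_left diff_right zero_right)
    also have "norm \<dots> \<le> norm (M x) * ?N * K + norm (M y - M x) * norm (g y) * K"
      by (rule order_trans[OF norm_triangle_ineq add_mono[OF K(1) K(1)]])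
    also have "\<dots> \<le> norm (M x) * ?N * K + norm (M y - M x) * (?N + norm (y - x) * KG) * K"
      using norm_triangle_ineq[of "g y - g' (y - x)" "g' (y - x)"] KG[of "y - x"] K(2)
      by (intro add_left_mono mult_right_mono mult_left_mono) auto
    finally show "norm (prod (M y) (g y) - prod (M x) (g x) - prod (M x) (g' (y - x))) / norm (y - x)
        \<le> norm (M x) * Ng y * K + norm (M y - M x) * (Ng y + KG) * K"
      using \<open>y \<noteq> x\<close> by (simp add: Ng_def divide_right_mono field_simps)
  next
    show "((\<lambda>y. norm (M x) * Ng y * K + norm (M y - M x) * (Ng y + KG) * K) \<longlongrightarrow> 0) (at x)"
      using \<open>(Ng \<longlongrightarrow> 0) (at x)\<close> M unfolding isCont_def
      by (intro tendsto_eq_intros) (auto simp: LIM_zero_iff)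
  qed simp
qed

section \<open>Gradient and Hessian of a C2 function\<close>

lemma has_derivative_vec_lambda:
  fixes f :: "'k::finite \<Rightarrow> 'a::real_normed_vector \<Rightarrow> real"
  assumes "\<And>k. (f k has_derivative f' k) F"
  shows "((\<lambda>y. \<chi> k. f k y) has_derivative (\<lambda>h. \<chi> k. f' k h)) F"
proof -
  have "(\<chi> k. v k) = (\<Sum>k\<in>UNIV. v k *\<^sub>R axis k (1::real))" for v :: "'k \<Rightarrow> real"
    by (simp add: vec_eq_iff axis_def if_distrib cong: if_cong)
  then show ?thesis using assms by (auto intro!: derivative_eq_intros)
qed

lemma pd_eq_derivative:
  assumes "(f has_derivative f') (at y)"
  shows "pd k f y = f' (axis k 1)"
proof -
  have line: "((\<lambda>t. y + t *\<^sub>R axis k 1) has_derivative (\<lambda>t. t *\<^sub>R axis k 1)) (at 0)"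
    by (auto intro!: derivative_eq_intros)
  have "((\<lambda>t. f (y + t *\<^sub>R axis k 1)) has_derivative (\<lambda>t. f' (t *\<^sub>R axis k 1))) (at 0)"
    using has_derivative_compose[OF line, of f f'] assms by simp
  moreover have "(\<lambda>t. f' (t *\<^sub>R axis k 1)) = (*) (f' (axis k 1))"
    using has_derivative_bounded_linear[OF assms] by (auto simp: linear_simps)
  ultimately have "((\<lambda>t. f (y + t *\<^sub>R axis k 1)) has_real_derivative f' (axis k 1)) (at 0)"
    by (simp add: has_field_derivative_def)
  then show ?thesis unfolding pd_def by (rule DERIV_imp_deriv)
qed

lemma
  assumes "C2_on D F" "open D" "x \<in> D"
  shows C2_on_has_derivative_grad: "(grad F has_derivative (\<lambda>h. hess F x *v h)) (at x)"
    and C2_on_isCont_hess: "isCont (hess F) x"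
proof -
  obtain F' F'' where F': "\<And>y. y \<in> D \<Longrightarrow> (F has_derivative blinfun_apply (F' y)) (at y)"
    and F'': "\<And>y. y \<in> D \<Longrightarrow> (F' has_derivative blinfun_apply (F'' y)) (at y)"
    and F''_cont: "continuous_on D F''"
    using \<open>C2_on D F\<close> unfolding C2_on_def by blast
  have pd_deriv: "(pd k F has_derivative (\<lambda>h. F'' y h (axis k 1))) (at y)" if "y \<in> D" for y k
  proof -
    have "((\<lambda>z. F' z (axis k 1)) has_derivative (\<lambda>h. F'' y h (axis k 1))) (at y)"
      using blinfun.bounded_linear_left F''[OF that] by (rule bounded_linear.has_derivative)
    then show ?thesis
      using \<open>open D\<close> that
      by (rule has_derivative_transform_within_open) (simp add: pd_eq_derivative[OF F'])
  qed
  have hess_eq: "hess F y = (\<chi> k l. F'' y (axis l 1) (axis k 1))" if "y \<in> D" for y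
    unfolding hess_def using pd_eq_derivative[OF pd_deriv[OF that]] by simp
  define L where "L h = (\<chi> k. F'' x h (axis k 1))" for h
  have "(grad F has_derivative L) (at x)"
    unfolding grad_def L_def using pd_deriv[OF \<open>x \<in> D\<close>] by (rule has_derivative_vec_lambda)
  moreover have "L = (\<lambda>h. hess F x *v h)"
  proof -
    have "bounded_linear L" using calculation has_derivative_bounded_linear by blast
    moreover have "matrix L = hess F x" unfolding matrix_def L_def hess_eq[OF \<open>x \<in> D\<close>] by simp
    ultimately show ?thesis using matrix_vector_mul(3) by metis
  qed
  ultimately show "(grad F has_derivative (\<lambda>h. hess F x *v h)) (at x)" by simp
  have hess_near: "eventually (\<lambda>y. hess F y = (\<chi> k l. F'' y (axis l 1) (axis k 1))) (nhds x)"
    unfolding eventually_nhds using \<open>open D\<close> \<open>x \<in> D\<close> hess_eq by blast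
  have "isCont F'' x"
    using F''_cont \<open>open D\<close> \<open>x \<in> D\<close> continuous_on_eq_continuous_at by blast
  then have "isCont (\<lambda>y. \<chi> k l. F'' y (axis l 1) (axis k 1)) x"
    unfolding isCont_def by (intro tendsto_vec_lambda blinfun.tendsto tendsto_const)
  then show "isCont (hess F) x" using isCont_cong[OF hess_near] by simp
qed

section \<open>Block decomposition\<close>

lemma cpart_join [simp]: "cpart (join c b) = c"
  by (simp add: cpart_def join_def vec_eq_iff)

lemma bpart_join [simp]: "bpart (join c b) = b"
  by (simp add: bpart_def join_def vec_eq_iff)

lemma join_cpart_bpart [simp]: "join (cpart v) (bpart v) = v"
  by (simp add: cpart_def bpart_def join_def vec_eq_iff split: sum.split)

lemma join_eq_iff: "join c b = v \<longleftrightarrow> c = cpart v \<and> b = bpart v"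
  by auto

lemma join_zero [simp]: "join 0 0 = 0"
  by (simp add: join_def vec_eq_iff split: sum.split)

lemma diff_join: "v - join c b = join (cpart v - c) (bpart v - b)"
  by (simp add: cpart_def bpart_def join_def vec_eq_iff split: sum.split)

lemma cpart_zero [simp]: "cpart 0 = 0"
  by (simp add: cpart_def vec_eq_iff)

lemma bpart_zero [simp]: "bpart 0 = 0"
  by (simp add: bpart_def vec_eq_iff)

lemma cpart_diff [simp]: "cpart (u - v) = cpart u - cpart v"
  by (simp add: cpart_def vec_eq_iff)

lemma bpart_diff [simp]: "bpart (u - v) = bpart u - bpart v"
  by (simp add: bpart_def vec_eq_iff)

lemma hess_mult:
  "hess F th *v v = join (H11 F th *v cpart v + H12 F th *v bpart v)
      (H21 F th *v cpart v + H22 F th *v bpart v)"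
  by (simp add: vec_eq_iff matrix_vector_mult_def join_def H11_def H12_def H21_def H22_def
      cpart_def bpart_def sum.Plus flip: UNIV_Plus_UNIV split: sum.split)

lemma Bmat_mult:
  "Bmat F th *v v = join (H11 F th *v cpart v) (H21 F th *v cpart v + H22 F th *v bpart v)"
  by (simp add: vec_eq_iff matrix_vector_mult_def join_def H11_def H21_def H22_def
      Bmat_def cpart_def bpart_def sum.Plus flip: UNIV_Plus_UNIV split: sum.split)

lemma has_derivative_cpart:
  "(f has_derivative f') F \<Longrightarrow> ((\<lambda>y. cpart (f y)) has_derivative (\<lambda>h. cpart (f' h))) F"
  unfolding cpart_def
  by (intro has_derivative_vec_lambda bounded_linear.has_derivative[OF bounded_linear_vec_nth])

lemma has_derivative_bpart:
  "(f has_derivative f') F \<Longrightarrow> ((\<lambda>y. bpart (f y)) has_derivative (\<lambda>h. bpart (f' h))) F"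
  unfolding bpart_def
  by (intro has_derivative_vec_lambda bounded_linear.has_derivative[OF bounded_linear_vec_nth])

lemma has_derivative_join:
  assumes "(f has_derivative f') F" "(g has_derivative g') F"
  shows "((\<lambda>y. join (f y) (g y)) has_derivative (\<lambda>h. join (f' h) (g' h))) F"
  unfolding join_def
proof (rule has_derivative_vec_lambda)
  fix k
  show "((\<lambda>y. case k of Inl i \<Rightarrow> f y $ i | Inr j \<Rightarrow> g y $ j) has_derivative
          (\<lambda>h. case k of Inl i \<Rightarrow> f' h $ i | Inr j \<Rightarrow> g' h $ j)) F"
    by (cases k) (auto intro: bounded_linear.has_derivative[OF bounded_linear_vec_nth] assms)
qed

lemma
  assumes "isCont (hess F) th"
  shows isCont_H11: "isCont (H11 F) th"
    and isCont_H21: "isCont (H21 F) th"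
    and isCont_H22: "isCont (H22 F) th"
  using assms unfolding isCont_def H11_def H21_def H22_def
  by (auto intro!: tendsto_vec_lambda tendsto_vec_nth)

lemma Bmat_mult_forward_substitution:
  assumes "invertible (H11 F th)" "invertible (H22 F th)"
  shows "Bmat F th *v join (matrix_inv (H11 F th) *v cpart v)
      (matrix_inv (H22 F th) *v (bpart v - H21 F th *v (matrix_inv (H11 F th) *v cpart v))) = v"
  by (simp add: Bmat_mult matrix_inv_cancel_right assms)

lemma invertible_Bmat:
  assumes "invertible (H11 F th)" "invertible (H22 F th)"
  shows "invertible (Bmat F th)"
  unfolding invertible_right_inverse matrix_right_invertible_surjective
  by (rule surjI[where g = "(*v) (Bmat F th)", OF Bmat_mult_forward_substitution[OF assms]])

lemma matrix_inv_Bmat_mult: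
  assumes "invertible (H11 F th)" "invertible (H22 F th)"
  shows "matrix_inv (Bmat F th) *v v = join (matrix_inv (H11 F th) *v cpart v)
      (matrix_inv (H22 F th) *v (bpart v - H21 F th *v (matrix_inv (H11 F th) *v cpart v)))"
    (is "_ = ?x")
  using matrix_inv_cancel_left[OF invertible_Bmat[OF assms], of ?x]
  unfolding Bmat_mult_forward_substitution[OF assms] .

lemma has_derivative_matrix_inv_mult_vanishing:
  fixes A :: "'a::real_normed_vector \<Rightarrow> real^'n::finite^'n"
  assumes "isCont A x" "invertible (A x)" "(g has_derivative g') (at x)" "g x = 0"
  shows "((\<lambda>y. matrix_inv (A y) *v g y) has_derivative (\<lambda>h. matrix_inv (A x) *v g' h)) (at x)"
  using bounded_bilinear.has_derivative_isCont_vanishing[OF bounded_bilinear_matrix_vector_mult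
      isCont_o2[OF assms(1) isCont_matrix_inv[OF assms(2)]] assms(3,4)] .

section \<open>The block Newton maps\<close>

lemma cpart_Gmap [simp]: "cpart (Gmap s F th) = G1 F th"
  by (simp add: Gmap_def)

lemma G1_eq_cpart_iff:
  assumes "invertible (H11 F th)"
  shows "G1 F th = cpart th \<longleftrightarrow> grad_c F th = 0"
  using matrix_inv_mult_eq_0_iff[OF assms] by (simp add: G1_def)

lemma G2_at_G1_fixed_point:
  assumes "G1 F th = cpart th"
  shows "G2 s F th = bpart th - matrix_inv (H22 F th) *v grad_b F th"
  using assms by (cases s) simp_all

lemma inv_assm_at_G1_fixed_point:
  assumes "inv_assm s F D Os" "th \<in> Os" "G1 F th = cpart th"
  shows "invertible (H11 F th)" "invertible (H22 F th)"
  using assms by (cases s; force)+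

lemma Gmap_fixed_point_iff_grad_eq_0:
  assumes "invertible (H11 F th)" "invertible (H22 F th)"
  shows "Gmap s F th = th \<longleftrightarrow> grad F th = 0"
proof -
  have "Gmap s F th = th \<longleftrightarrow> G1 F th = cpart th \<and> G2 s F th = bpart th"
    by (simp add: Gmap_def join_eq_iff)
  also have "\<dots> \<longleftrightarrow> grad_c F th = 0 \<and> grad_b F th = 0"
    using G2_at_G1_fixed_point[of F th s]
    by (auto simp: G1_eq_cpart_iff[OF assms(1)] matrix_inv_mult_eq_0_iff[OF assms(2)])
  also have "\<dots> \<longleftrightarrow> grad F th = 0"
    using join_eq_iff[of 0 0 "grad F th"] by (auto simp: grad_c_def grad_b_def)
  finally show ?thesis .
qed

context
  fixes F :: "real^('c::finite + 'b::finite) \<Rightarrow> real" and th :: "real^('c + 'b)"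
  assumes grad_deriv: "(grad F has_derivative (\<lambda>h. hess F th *v h)) (at th)"
    and hess_cont: "isCont (hess F) th"
    and critical: "grad F th = 0"
    and inv11: "invertible (H11 F th)"
begin

lemma G1_at_critical_point: "G1 F th = cpart th"
  using critical G1_eq_cpart_iff[OF inv11] by (simp add: grad_c_def)

lemma has_derivative_grad_c: "(grad_c F has_derivative (\<lambda>h. cpart (hess F th *v h))) (at th)"
  unfolding grad_c_def[abs_def] by (rule has_derivative_cpart[OF grad_deriv])

lemma has_derivative_grad_b: "(grad_b F has_derivative (\<lambda>h. bpart (hess F th *v h))) (at th)"
  unfolding grad_b_def[abs_def] by (rule has_derivative_bpart[OF grad_deriv])

lemma has_derivative_G1:
  "(G1 F has_derivative (\<lambda>h. cpart h - matrix_inv (H11 F th) *v cpart (hess F th *v h))) (at th)"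
proof -
  have "((\<lambda>y. matrix_inv (H11 F y) *v grad_c F y) has_derivative
      (\<lambda>h. matrix_inv (H11 F th) *v cpart (hess F th *v h))) (at th)"
    using isCont_H11[OF hess_cont] inv11 has_derivative_grad_c
    by (rule has_derivative_matrix_inv_mult_vanishing) (simp add: grad_c_def critical)
  from has_derivative_diff[OF has_derivative_cpart[OF has_derivative_ident] this]
  show ?thesis by (simp add: G1_def[abs_def])
qed

lemma has_derivative_G2_LGS:
  assumes inv22: "invertible (H22 F th)"
  shows "(G2 LGS F has_derivative (\<lambda>h. bpart h - matrix_inv (H22 F th) *v
      (bpart (hess F th *v h) - H21 F th *v (matrix_inv (H11 F th) *v cpart (hess F th *v h))))) (at th)"
proof -
  let ?u = "\<lambda>h. matrix_inv (H11 F th) *v cpart (hess F th *v h)"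
  have G1_minus_cpart: "((\<lambda>y. G1 F y - cpart y) has_derivative (\<lambda>h. - ?u h)) (at th)"
    using has_derivative_diff[OF has_derivative_G1 has_derivative_cpart[OF has_derivative_ident]]
    by simp
  have "((\<lambda>y. H21 F y *v (G1 F y - cpart y)) has_derivative (\<lambda>h. H21 F th *v - ?u h)) (at th)"
    by (rule bounded_bilinear.has_derivative_isCont_vanishing[OF bounded_bilinear_matrix_vector_mult
        isCont_H21[OF hess_cont] G1_minus_cpart]) (simp add: G1_at_critical_point)
  from has_derivative_add[OF has_derivative_grad_b this]
  have "((\<lambda>y. grad_b F y + H21 F y *v (G1 F y - cpart y)) has_derivative
      (\<lambda>h. bpart (hess F th *v h) - H21 F th *v ?u h)) (at th)"
    by simp
  then have "((\<lambda>y. matrix_inv (H22 F y) *v (grad_b F y + H21 F y *v (G1 F y - cpart y)))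
      has_derivative (\<lambda>h. matrix_inv (H22 F th) *v (bpart (hess F th *v h) - H21 F th *v ?u h))) (at th)"
    using isCont_H22[OF hess_cont] inv22
    by (intro has_derivative_matrix_inv_mult_vanishing)
      (simp_all add: G1_at_critical_point grad_b_def critical)
  from has_derivative_diff[OF has_derivative_bpart[OF has_derivative_ident] this]
  show ?thesis by (simp add: G2.simps(2)[abs_def])
qed

lemma has_derivative_G2_NLGS:
  assumes inv22: "invertible (H22 F th)"
  shows "(G2 NLGS F has_derivative (\<lambda>h. bpart h - matrix_inv (H22 F th) *v
      (bpart (hess F th *v h) - H21 F th *v (matrix_inv (H11 F th) *v cpart (hess F th *v h))))) (at th)"
proof -
  let ?u = "\<lambda>h. matrix_inv (H11 F th) *v cpart (hess F th *v h)"
  define psi where "psi y = join (G1 F y) (bpart y)" for y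
  have psi_th: "psi th = th" by (simp add: psi_def G1_at_critical_point)
  have psi_deriv: "(psi has_derivative (\<lambda>h. join (cpart h - ?u h) (bpart h))) (at th)"
    unfolding psi_def[abs_def]
    by (intro has_derivative_join has_derivative_G1 has_derivative_bpart has_derivative_ident)
  have hess_join: "bpart (hess F th *v join (cpart h - u) (bpart h))
      = bpart (hess F th *v h) - H21 F th *v u" for h u by (simp add: hess_mult matrix_vector_mult_diff_distrib)
  have "(grad_b F has_derivative (\<lambda>h. bpart (hess F th *v h))) (at (psi th))"
    unfolding psi_th by (rule has_derivative_grad_b)
  from has_derivative_compose[OF psi_deriv this]
  have grad_b_psi: "((\<lambda>y. grad_b F (psi y)) has_derivative
      (\<lambda>h. bpart (hess F th *v h) - H21 F th *v ?u h)) (at th)"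
    unfolding hess_join .
  have "isCont (H22 F) (psi th)"
    unfolding psi_th by (rule isCont_H22[OF hess_cont])
  with has_derivative_continuous[OF psi_deriv] have H22_psi: "isCont (\<lambda>y. H22 F (psi y)) th"
    by (rule isCont_o2)
  have "invertible (H22 F (psi th))" "grad_b F (psi th) = 0"
    using inv22 critical by (simp_all add: psi_th grad_b_def)
  from has_derivative_matrix_inv_mult_vanishing[OF H22_psi this(1) grad_b_psi this(2)]
  have "((\<lambda>y. matrix_inv (H22 F (psi y)) *v grad_b F (psi y)) has_derivative
      (\<lambda>h. matrix_inv (H22 F th) *v (bpart (hess F th *v h) - H21 F th *v ?u h))) (at th)"
    unfolding psi_th .
  moreover have "G2 NLGS F = (\<lambda>y. bpart y - matrix_inv (H22 F (psi y)) *v grad_b F (psi y))"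
    by (simp add: psi_def fun_eq_iff)
  ultimately show ?thesis
    using has_derivative_diff[OF has_derivative_bpart[OF has_derivative_ident]] by simp
qed

lemma has_derivative_Gmap:
  assumes inv22: "invertible (H22 F th)"
  shows "(Gmap s F has_derivative (\<lambda>h. h - matrix_inv (Bmat F th) *v (hess F th *v h))) (at th)"
proof -
  have "(G2 s F has_derivative (\<lambda>h. bpart h - matrix_inv (H22 F th) *v
      (bpart (hess F th *v h) - H21 F th *v (matrix_inv (H11 F th) *v cpart (hess F th *v h))))) (at th)"
    using has_derivative_G2_LGS[OF inv22] has_derivative_G2_NLGS[OF inv22] by (cases s) simp_all
  from has_derivative_join[OF has_derivative_G1 this] show ?thesis
    by (simp add: Gmap_def[abs_def] matrix_inv_Bmat_mult[OF inv11 inv22] diff_join)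
qed

end

theorem lemma3p2:
  fixes F :: "real^('c::finite + 'b::finite) \<Rightarrow> real"
    and D Os :: "(real^('c + 'b)) set"
    and s :: scheme
    and th0 :: "real^('c + 'b)"
  assumes dim: "CARD('c) = CARD('b) + 1"
    and D_open: "open D"
    and F_C2: "C2_on D F"
    and O_open: "open Os"
    and O_sub: "Os \<subseteq> D"
    and invert: "inv_assm s F D Os"
    and th0_in: "th0 \<in> Os"
    and fixp: "Gmap s F th0 = th0"
    and spd: "sym_pos_def (hess F th0)"
  shows "(Gmap s F has_derivative
           (\<lambda>h. (mat 1 - matrix_inv (Bmat F th0) ** hess F th0) *v h)) (at th0)"
proof -
  have "th0 \<in> D" using O_sub th0_in by blast
  have "G1 F th0 = cpart th0" using fixp by (metis cpart_Gmap)
  then have inv11: "invertible (H11 F th0)" and inv22: "invertible (H22 F th0)"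
    using inv_assm_at_G1_fixed_point[OF invert th0_in] by blast+
  have "grad F th0 = 0"
    using fixp Gmap_fixed_point_iff_grad_eq_0[OF inv11 inv22] by blast
  with C2_on_has_derivative_grad[OF F_C2 D_open \<open>th0 \<in> D\<close>]
    C2_on_isCont_hess[OF F_C2 D_open \<open>th0 \<in> D\<close>]
  have "(Gmap s F has_derivative (\<lambda>h. h - matrix_inv (Bmat F th0) *v (hess F th0 *v h))) (at th0)"
    using inv11 inv22 by (rule has_derivative_Gmap)
  then show ?thesis
    by (simp add: matrix_vector_mult_diff_rdistrib matrix_vector_mul_assoc)
qed

end
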